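(* Let $k\ge0$, $T>0$, and let $f$ be a solution of the kinetic model on $[0,T]$ satisfying hypotheses (H0) and (H1). Let $(f_h,{\bf q}_h)$, $f_h(t)\in\mathcal G_h^k$, ${\bf q}_h(t)\in\mathcal U_h^k$, be the solution of the semi-discrete DG scheme with periodic boundary conditions. Then there is a constant $C>0$, depending only on $d$, $\Omega$, $k$, $\phi$ and $\xi_T$, such that for all $t\in[0,T]$, $$\|{\bf v}_f(t)-{\bf v}_{f_h}(t)\|_{L^\infty(\Omega)}\le C\,\|f(t)-f_h(t)\|_{L^2(\Omega\times\mathbb S^{d-1})}.$$
   Context: Setting. Let $d\ge 2$, let $\Omega\subset\mathbb R^d$ be a box with periodic boundary conditions (identified with a flat torus; distances $|{\bf x}-{\bf x}'|$ are periodic distances), and let $\mathbb S^{d-1}$ be the unit sphere; $\nabla_{\bf v}$, ${\rm div}_{\bf v}$ denote the tangential gradient and divergence on $\mathbb S^{d-1}$, and $P_{{\bf v}^\perp}=\mathrm{Id}-{\bf v}\otimes{\bf v}$. Fix $\nu>0$ and nonnegative kernels $k,\phi$ satisfying (H0): $k,\phi\in\mathcal C^p_c([0,\infty))$ with $p\ge 2$. Kinetic model: $\partial_t f+{\bf v}\cdot\nabla_{\bf x} f=-{\rm div}_{\bf v}\big[P_{{\bf v}^\perp}{\bf v}_f\,f-\nu\nabla_{\bf v} f\big]$, with ${\bf v}_f=(\mathbf J_f+\mathbf R_f)/|\mathbf J_f+\mathbf R_f|$, $\mathbf J_f(t,{\bf x})=\int_{\Omega\times\mathbb S^{d-1}}k(|{\bf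 x}-{\bf x}'|)\,{\bf v}'f(t,{\bf x}',{\bf v}')\,d{\bf x}'d{\bf v}'$, $\mathbf R_f(t,{\bf x})=-\nabla_{\bf x}\int_{\Omega\times\mathbb S^{d-1}}\phi(|{\bf x}-{\bf x}'|)f(t,{\bf x}',{\bf v}')\,d{\bf x}'d{\bf v}'$. Hypothesis (H1): there is $\xi_T>0$ with $|\mathbf J_f(t,{\bf x})+\mathbf R_f(t,{\bf x})|\ge\xi_T$ for all $(t,{\bf x})\in[0,T]\times\Omega$. Mesh: $\mathcal T_h^{\bf x}=\{K_{\bf x}\}$ is a shape-regular partition of $\Omega$ into Cartesian cells (compatible with periodicity), $\mathcal T_h^{\bf v}=\{K_{\bf v}\}$ a shape-regular partition of $\mathbb S^{d-1}$ into cells, $\mathcal T_h=\{K=K_{\bf x}\times K_{\bf v}\}$, with mesh size $h$. Faces: $\mathcal E_{\bf x}=\{\sigma_{\bf x}\times K_{\bf v}:\sigma_{\bf x}\subset\partial K_{\bf x}\}$, $\mathcal E_{\bf v}=\{K_{\bf x}\times\sigma_{\bf v}:\sigma_{\bf v}\subset\partial K_{\bf v}\}$. Spaces: $\mathcal G_h^k=\{g\in L^2(\Omega\times\mathbb S^{d-1}): g|_K\in P^k(K)\ \forall K\in\mathcal T_h\}$ ($P^k$ = polynomials of total degree $\le k$), and $\mathcal U_h^k$ the corresponding space of vector fields with each component piecewise in $P^k$. For a face $\sigma$ shared by cells $K^-$ and $K^+$, with traces $g^\pm$ from $K^\pm$ and ${\bf n}$ the unit normal on $\sigma$ pointing from $K^-$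 to $K^+$ (${\bf n}_{\bf x}$ for $\sigma\in\mathcal E_{\bf x}$, ${\bf n}_{\bf v}$ for $\sigma\in\mathcal E_{\bf v}$): $[g]=g^+-g^-$, $\{g\}=\tfrac12(g^++g^-)$ (written $[\cdot]_{\bf x},\{\cdot\}_{\bf x}$ or $[\cdot]_{\bf v},\{\cdot\}_{\bf v}$). Volume integrals of derivatives of piecewise functions are taken cellwise. Discrete velocity: $\rho_h=\int_{\mathbb S^{d-1}}f_h\,d{\bf v}$, $\rho_h{\bf u}_h=\int_{\mathbb S^{d-1}}{\bf v} f_h\,d{\bf v}$, $\mathbf J_h(t,{\bf x})=\int_\Omega k(|{\bf x}-{\bf x}'|)\rho_h{\bf u}_h(t,{\bf x}')d{\bf x}'$, $\mathbf R_h(t,{\bf x})=-\int_\Omega\nabla_{\bf x}[\phi(|{\bf x}-{\bf x}'|)]\rho_h(t,{\bf x}')d{\bf x}'$, ${\bf v}_{f_h}=(\mathbf J_h+\mathbf R_h)/|\mathbf J_h+\mathbf R_h|$ (it is assumed $\mathbf J_h+\mathbf R_h\neq0$). Fluxes (with constants $C_{11},C_{22}>0$): $\widehat{f_h{\bf v}}\cdot{\bf n}_{\bf x}={\bf v}\cdot{\bf n}_{\bf x}\{f_h\}_{\bf x}-\tfrac12|{\bf v}\cdot{\bf n}_{\bf x}|[f_h]_{\bf x}$; $\widehat{f_hP_{{\bf v}^\perp}{\bf v}_{f_h}}\cdot{\bf n}_{\bf v}=P_{{\bf v}^\perp}{\bf v}_{f_h}\cdot{\bf n}_{\bf v}\{f_h\}_{\bf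 v}-\tfrac12|P_{{\bf v}^\perp}{\bf v}_{f_h}\cdot{\bf n}_{\bf v}|[f_h]_{\bf v}$; $\widehat{{\bf q}_h}\cdot{\bf n}_{\bf v}=\{{\bf q}_h\}_{\bf v}\cdot{\bf n}_{\bf v}+\tfrac{C_{11}}2[f_h]_{\bf v}$; $\widehat{f_h}{\bf n}_{\bf v}=\{f_h\}_{\bf v}{\bf n}_{\bf v}+\tfrac{C_{22}}2[{\bf q}_h]_{\bf v}$. Semi-discrete DG scheme: $f_h(t)\in\mathcal G_h^k$, ${\bf q}_h(t)\in\mathcal U_h^k$ satisfy, for all $g\in\mathcal G_h^k$ and ${\bf u}\in\mathcal U_h^k$, $\int\!\big(\partial_tf_h\,g-f_h{\bf v}\cdot\nabla_{\bf x}g\big)-\int\!\big(P_{{\bf v}^\perp}{\bf v}_{f_h}f_h-\nu{\bf q}_h\big)\cdot\nabla_{\bf v}g-\sum_{\sigma\in\mathcal E_{\bf x}}\int_\sigma\widehat{f_h{\bf v}}\cdot{\bf n}_{\bf x}[g]_{\bf x}-\sum_{\sigma\in\mathcal E_{\bf v}}\int_\sigma\big(\widehat{f_hP_{{\bf v}^\perp}{\bf v}_{f_h}}-\nu\widehat{{\bf q}_h}\big)\cdot{\bf n}_{\bf v}[g]_{\bf v}=0,$ $\int\!\big({\bf q}_h\cdot{\bf u}+f_h\,{\rm div}_{\bf v}{\bf u}\big)+\sum_{\sigma\in\mathcal E_{\bf v}}\int_\sigma\widehat{f_h}{\bf n}_{\bf v}\cdot[{\bf u}]_{\bf v}=0,$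 where unlabeled volume integrals are over $\Omega\times\mathbb S^{d-1}$. *)

theory Defs
  imports "HOL-Analysis.Analysis"
begin

text \<open>Periodic box Omega = [0,L_1) x ... x [0,L_d), identified with a flat torus.\<close>
definition torus_box :: "real^'n \<Rightarrow> (real^'n) set" where
  "torus_box L = {x. \<forall>i. 0 \<le> x$i \<and> x$i < L$i}"

definition per1 :: "real \<Rightarrow> real \<Rightarrow> real" where
  "per1 l a = \<bar>a - l * of_int (round (a / l))\<bar>"

definition per_dist :: "real^'n \<Rightarrow> real^'n \<Rightarrow> real^'n \<Rightarrow> real" where
  "per_dist L x y = sqrt (\<Sum>i\<in>UNIV. (per1 (L$i) (x$i - y$i))^2)"

text \<open>Surface measure on the unit sphere S^{d-1}: sigma(A) = d * Lebesgue measure of the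
  cone {r v : 0 < r \<le> 1, v \<in> A} (pushforward of Lebesgue measure on the punctured
  unit ball under radial projection, scaled by d).\<close>
definition sphere_measure :: "(real^'n) measure" where
  "sphere_measure = scale_measure (of_nat CARD('n))
     (distr (lebesgue_on (ball 0 1 - {0})) borel (\<lambda>y. y /\<^sub>R norm y))"

definition phase_measure :: "real^'n \<Rightarrow> ((real^'n) \<times> (real^'n)) measure" where
  "phase_measure L = lebesgue_on (torus_box L) \<Otimes>\<^sub>M sphere_measure"

definition grad :: "(real^'n \<Rightarrow> real) \<Rightarrow> real^'n \<Rightarrow> real^'n" where
  "grad g x = (\<chi> i. deriv (\<lambda>s. g (x + s *\<^sub>R axis i 1)) 0)"

text \<open>g \<in> C^p_c([0,\<infinity>)): p times continuously differentiable on [0,\<infinity>)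
  (one-sided at 0) with compact support.\<close>
definition Ckc :: "nat \<Rightarrow> (real \<Rightarrow> real) \<Rightarrow> bool" where
  "Ckc p g \<longleftrightarrow> (\<exists>R. \<forall>r\<ge>R. g r = 0) \<and>
     (\<exists>D :: nat \<Rightarrow> real \<Rightarrow> real. (\<forall>r\<ge>0. D 0 r = g r) \<and>
        (\<forall>j<p. \<forall>r\<ge>0. (D j has_real_derivative D (Suc j) r) (at r within {0..})) \<and>
        continuous_on {0..} (D p))"

definition L2_fun :: "'a measure \<Rightarrow> ('a \<Rightarrow> real) \<Rightarrow> bool" where
  "L2_fun M g \<longleftrightarrow> g \<in> borel_measurable M \<and> integrable M (\<lambda>z. (g z)^2)"

definition L2_dist :: "real^'n \<Rightarrow> (real^'n \<Rightarrow> real^'n \<Rightarrow> real) \<Rightarrow> (real^'n \<Rightarrow> real^'n \<Rightarrow> real) \<Rightarrow> real" where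
  "L2_dist L f g = sqrt (\<integral>z. (f (fst z) (snd z) - g (fst z) (snd z))^2 \<partial>phase_measure L)"

definition unitv :: "real^'n \<Rightarrow> real^'n" where
  "unitv w = w /\<^sub>R norm w"

definition J_f :: "real^'n \<Rightarrow> (real \<Rightarrow> real) \<Rightarrow> (real^'n \<Rightarrow> real^'n \<Rightarrow> real) \<Rightarrow> real^'n \<Rightarrow> real^'n" where
  "J_f L kk f x = (\<integral>z. (kk (per_dist L x (fst z)) * f (fst z) (snd z)) *\<^sub>R snd z \<partial>phase_measure L)"

definition R_f :: "real^'n \<Rightarrow> (real \<Rightarrow> real) \<Rightarrow> (real^'n \<Rightarrow> real^'n \<Rightarrow> real) \<Rightarrow> real^'n \<Rightarrow> real^'n" where
  "R_f L phi f x = - grad (\<lambda>y. \<integral>z. phi (per_dist L y (fst z)) * f (fst z) (snd z) \<partial>phase_measure L) x"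

definition v_f :: "real^'n \<Rightarrow> (real \<Rightarrow> real) \<Rightarrow> (real \<Rightarrow> real) \<Rightarrow> (real^'n \<Rightarrow> real^'n \<Rightarrow> real) \<Rightarrow> real^'n \<Rightarrow> real^'n" where
  "v_f L kk phi f x = unitv (J_f L kk f x + R_f L phi f x)"

definition rho_h :: "(real^'n \<Rightarrow> real^'n \<Rightarrow> real) \<Rightarrow> real^'n \<Rightarrow> real" where
  "rho_h fh x' = (\<integral>v. fh x' v \<partial>sphere_measure)"

definition rhou_h :: "(real^'n \<Rightarrow> real^'n \<Rightarrow> real) \<Rightarrow> real^'n \<Rightarrow> real^'n" where
  "rhou_h fh x' = (\<integral>v. fh x' v *\<^sub>R v \<partial>sphere_measure)"

definition J_h :: "real^'n \<Rightarrow> (real \<Rightarrow> real) \<Rightarrow> (real^'n \<Rightarrow> real^'n \<Rightarrow> real) \<Rightarrow> real^'n \<Rightarrow> real^'n" where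
  "J_h L kk fh x = (\<integral>x'. kk (per_dist L x x') *\<^sub>R rhou_h fh x' \<partial>lebesgue_on (torus_box L))"

definition R_h :: "real^'n \<Rightarrow> (real \<Rightarrow> real) \<Rightarrow> (real^'n \<Rightarrow> real^'n \<Rightarrow> real) \<Rightarrow> real^'n \<Rightarrow> real^'n" where
  "R_h L phi fh x = - (\<integral>x'. rho_h fh x' *\<^sub>R grad (\<lambda>y. phi (per_dist L y x')) x \<partial>lebesgue_on (torus_box L))"

definition v_h :: "real^'n \<Rightarrow> (real \<Rightarrow> real) \<Rightarrow> (real \<Rightarrow> real) \<Rightarrow> (real^'n \<Rightarrow> real^'n \<Rightarrow> real) \<Rightarrow> real^'n \<Rightarrow> real^'n" where
  "v_h L kk phi fh x = unitv (J_h L kk fh x + R_h L phi fh x)"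

end

theory Submission
  imports Defs
begin

text \<open>The field \<open>v\<^sub>f\<close> is the normalisation of \<open>J\<^sub>f + R\<^sub>f\<close>, and \<open>w \<mapsto> w/|w|\<close> is Lipschitz
  with constant \<open>2/\<xi>\<close> on \<open>{|w| \<ge> \<xi>}\<close>. Both fields are linear in the density: \<open>J\<close> integrates it
  against the bounded kernel \<open>k(|x - x'|) v'\<close>, and \<open>R\<close> against the partial derivatives of
  \<open>\<phi>(|x - x'|)\<close>. These exist off the hyperplanes where the periodic distance has kinks and are
  bounded by the Lipschitz constant of \<open>\<phi>\<close>, so dominated convergence allows differentiating
  under the integral sign. By Fubini, the discrete fields built from \<open>\<rho>\<^sub>h\<close> and
  \<open>\<rho>\<^sub>hu\<^sub>h\<close> are just \<open>J\<close> and \<open>R\<close> of \<open>f\<^sub>h\<close>, so \<open>v\<^sub>h\<close> is the field \<open>v\<close> of \<open>f\<^sub>h\<close>. Hence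
  \<open>|v\<^sub>f - v\<^sub>h|\<close> is bounded by a multiple of \<open>\<parallel>f - f\<^sub>h\<parallel>\<^sub>L\<^sub>1\<close>, and the Cauchy--Schwarz
  inequality on the finite measure space \<open>\<Omega> \<times> S\<^sup>d\<^sup>-\<^sup>1\<close> bounds this by the \<open>L\<^sup>2\<close> distance.\<close>

section \<open>Integration\<close>

lemma borel_imp_lebesgue_measurable:
  fixes h :: "'a::euclidean_space \<Rightarrow> real"
  shows "h \<in> borel_measurable borel \<Longrightarrow> h \<in> borel_measurable lebesgue"
  by (intro measurable_completion) simp

lemma (in pair_sigma_finite) AE_pair_fst:
  assumes "AE x in M1. P x"
  shows "AE z in M1 \<Otimes>\<^sub>M M2. P (fst z)"
proof -
  obtain N where N: "{x \<in> space M1. \<not> P x} \<subseteq> N" "N \<in> null_sets M1"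
    using assms by (elim AE_E) auto
  have "N \<times> space M2 \<in> null_sets (M1 \<Otimes>\<^sub>M M2)"
    using N(2) by (intro M2.times_in_null_sets1) auto
  then show ?thesis
    by (rule AE_I') (use N(1) in \<open>auto simp: space_pair_measure\<close>)
qed

lemma (in pair_sigma_finite) AE_pair_snd:
  assumes "AE y in M2. P y"
  shows "AE z in M1 \<Otimes>\<^sub>M M2. P (snd z)"
proof -
  obtain N where N: "{y \<in> space M2. \<not> P y} \<subseteq> N" "N \<in> null_sets M2"
    using assms by (elim AE_E) auto
  have "space M1 \<times> N \<in> null_sets (M1 \<Otimes>\<^sub>M M2)"
    using N(2) by (intro M2.times_in_null_sets2) auto
  then show ?thesis
    by (rule AE_I') (use N(1) in \<open>auto simp: space_pair_measure\<close>)
qed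

lemma integrable_scaleR_AE_bounded:
  fixes G :: "'a \<Rightarrow> real" and V :: "'a \<Rightarrow> 'b::{banach, second_countable_topology}"
  assumes "integrable M G" "V \<in> borel_measurable M" "AE z in M. norm (V z) \<le> B"
  shows "integrable M (\<lambda>z. G z *\<^sub>R V z)"
proof (rule Bochner_Integration.integrable_bound[where f="\<lambda>z. B * G z"])
  show "AE z in M. norm (G z *\<^sub>R V z) \<le> norm (B * G z)"
    using assms(3)
  proof eventually_elim
    case (elim z)
    have "norm (G z *\<^sub>R V z) \<le> \<bar>G z\<bar> * B" using elim by (simp add: mult_left_mono)
    also have "\<dots> \<le> norm (B * G z)"
      using mult_left_mono[OF abs_ge_self[of B] abs_ge_zero[of "G z"]] by (simp add: abs_mult mult.commute)
    finally show ?case .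
  qed
qed (use assms in auto)

lemma norm_integral_scaleR_AE_bounded_le:
  fixes G :: "'a \<Rightarrow> real" and V :: "'a \<Rightarrow> 'b::{banach, second_countable_topology}"
  assumes "integrable M G" "V \<in> borel_measurable M" "AE z in M. norm (V z) \<le> B"
  shows "norm (\<integral>z. G z *\<^sub>R V z \<partial>M) \<le> B * (\<integral>z. \<bar>G z\<bar> \<partial>M)"
proof -
  have "norm (\<integral>z. G z *\<^sub>R V z \<partial>M) \<le> (\<integral>z. norm (G z *\<^sub>R V z) \<partial>M)"
    by (rule integral_norm_bound)
  also have "\<dots> \<le> (\<integral>z. B * \<bar>G z\<bar> \<partial>M)"
  proof (rule integral_mono_AE)
    show "integrable M (\<lambda>z. norm (G z *\<^sub>R V z))"
      by (rule integrable_norm[OF integrable_scaleR_AE_bounded[OF assms]])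
    show "AE z in M. norm (G z *\<^sub>R V z) \<le> B * \<bar>G z\<bar>"
      using assms(3)
    proof eventually_elim
      case (elim z)
      then show ?case using mult_left_mono[OF elim abs_ge_zero[of "G z"]] by (simp add: mult.commute)
    qed
  qed (use assms(1) in simp)
  finally show ?thesis by simp
qed

lemma (in finite_measure) integral_abs_le_sqrt_integral_square:
  fixes g :: "'a \<Rightarrow> real"
  assumes [measurable]: "g \<in> borel_measurable M" and g2: "integrable M (\<lambda>z. (g z)^2)"
  shows "(\<integral>z. \<bar>g z\<bar> \<partial>M) \<le> sqrt (measure M (space M)) * sqrt (\<integral>z. (g z)^2 \<partial>M)"
proof -
  have "integrable M g" by (rule square_integrable_imp_integrable) fact+
  have "ennreal ((\<integral>z. \<bar>g z\<bar> \<partial>M)^2) = (\<integral>\<^sup>+z. ennreal \<bar>g z\<bar> * ennreal 1 \<partial>M)^2"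
    using \<open>integrable M g\<close> by (simp add: nn_integral_eq_integral ennreal_power)
  also have "\<dots> \<le> (\<integral>\<^sup>+z. ennreal \<bar>g z\<bar> ^ 2 \<partial>M) * (\<integral>\<^sup>+z. ennreal 1 ^ 2 \<partial>M)"
    by (rule Cauchy_Schwarz_nn_integral) auto
  also have "(\<integral>\<^sup>+z. ennreal \<bar>g z\<bar> ^ 2 \<partial>M) = ennreal (\<integral>z. (g z)^2 \<partial>M)"
    using g2 by (simp add: ennreal_power nn_integral_eq_integral)
  finally have "(\<integral>z. \<bar>g z\<bar> \<partial>M)^2 \<le> measure M (space M) * (\<integral>z. (g z)^2 \<partial>M)"
    by (simp add: emeasure_eq_measure ennreal_mult[symmetric] ennreal_le_iff mult.commute)
  then show ?thesis
    by (simp add: real_le_rsqrt real_sqrt_mult[symmetric])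
qed

lemma L2_fun_diff:
  assumes "L2_fun M u" "L2_fun M w"
  shows "L2_fun M (\<lambda>z. u z - w z)"
proof -
  have meas: "(\<lambda>z. u z - w z) \<in> borel_measurable M"
    using assms unfolding L2_fun_def by (intro borel_measurable_diff) auto
  have "integrable M (\<lambda>z. (u z - w z)^2)"
  proof (rule Bochner_Integration.integrable_bound)
    show "integrable M (\<lambda>z. 2 * (u z)^2 + 2 * (w z)^2)"
      using assms unfolding L2_fun_def by simp
    have "(u z - w z)^2 \<le> 2 * (u z)^2 + 2 * (w z)^2" for z
      using zero_le_power2[of "u z + w z"] by (simp add: power2_eq_square algebra_simps)
    then show "AE z in M. norm ((u z - w z)^2) \<le> norm (2 * (u z)^2 + 2 * (w z)^2)" by simp
  qed (use meas in measurable)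
  with meas show ?thesis by (simp add: L2_fun_def)
qed

lemma has_real_derivative_integral_dominated:
  fixes F :: "real \<Rightarrow> 'a \<Rightarrow> real"
  assumes meas: "\<And>s. F s \<in> borel_measurable M"
    and int0: "integrable M (F 0)"
    and w: "integrable M w"
    and lip: "\<And>s z. z \<in> space M \<Longrightarrow> \<bar>F s z - F 0 z\<bar> \<le> \<bar>s\<bar> * w z"
    and der: "AE z in M. ((\<lambda>s. F s z) has_real_derivative F' z) (at 0)"
    and meas': "F' \<in> borel_measurable M"
  shows "((\<lambda>s. \<integral>z. F s z \<partial>M) has_real_derivative (\<integral>z. F' z \<partial>M)) (at 0)"
proof -
  have ints: "integrable M (F s)" for s
  proof -
    have "integrable M (\<lambda>z. F s z - F 0 z)"
      by (rule Bochner_Integration.integrable_bound[where f="\<lambda>z. \<bar>s\<bar> * w z"])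
        (use w meas order_trans[OF lip abs_ge_self] in auto)
    from Bochner_Integration.integrable_add[OF this int0] show ?thesis by simp
  qed
  show ?thesis unfolding DERIV_def tendsto_at_iff_sequentially
  proof (intro allI impI)
    fix X :: "nat \<Rightarrow> real" assume X: "\<forall>i. X i \<in> UNIV - {0}" "X \<longlonglongrightarrow> 0"
    have "(\<lambda>n. \<integral>z. (F (X n) z - F 0 z) / X n \<partial>M) \<longlonglongrightarrow> (\<integral>z. F' z \<partial>M)"
    proof (rule integral_dominated_convergence[where w=w])
      show "AE z in M. (\<lambda>n. (F (X n) z - F 0 z) / X n) \<longlonglongrightarrow> F' z"
        using der
      proof eventually_elim
        case (elim z)
        then have "(\<lambda>h. (F (0 + h) z - F 0 z) / h) \<midarrow>0\<rightarrow> F' z" by (simp add: DERIV_def)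
        then show ?case
          using X unfolding tendsto_at_iff_sequentially by (simp add: comp_def)
      qed
      show "AE z in M. norm ((F (X n) z - F 0 z) / X n) \<le> w z" for n
        using lip[of _ "X n"] X(1) by (intro AE_I2) (simp add: abs_divide divide_le_eq mult.commute)
    qed (use meas meas' w in auto)
    then show "((\<lambda>h. ((\<integral>z. F (0 + h) z \<partial>M) - (\<integral>z. F 0 z \<partial>M)) / h) \<circ> X) \<longlonglongrightarrow> (\<integral>z. F' z \<partial>M)"
      using ints int0 by (simp add: comp_def Bochner_Integration.integral_diff)
  qed
qed

section \<open>The periodic distance\<close>

lemma per1_le_dist_lattice:
  assumes "l > 0"
  shows "per1 l a \<le> \<bar>a - l * of_int m\<bar>"
proof -
  have scale: "l * \<bar>a / l - c\<bar> = \<bar>a - l * c\<bar>" for c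
  proof -
    have "l * \<bar>a / l - c\<bar> = \<bar>l * (a / l - c)\<bar>" using assms by (simp add: abs_mult)
    also have "l * (a / l - c) = a - l * c" using assms by (simp add: field_simps)
    finally show ?thesis .
  qed
  have "\<bar>a / l - of_int (round (a / l))\<bar> \<le> \<bar>a / l - of_int m\<bar>"
    by (rule round_diff_minimal)
  then have "l * \<bar>a / l - of_int (round (a / l))\<bar> \<le> l * \<bar>a / l - of_int m\<bar>"
    using assms by simp
  then show ?thesis by (simp add: per1_def scale)
qed

lemma per1_lipschitz:
  assumes "l > 0"
  shows "\<bar>per1 l a - per1 l b\<bar> \<le> \<bar>a - b\<bar>"
  using per1_le_dist_lattice[OF assms, of a "round (b / l)"]
    per1_le_dist_lattice[OF assms, of b "round (a / l)"]
  unfolding per1_def by linarith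

lemma per1_eq_0_imp_Ints:
  assumes "l > 0" "per1 l a = 0"
  shows "a / l \<in> \<int>"
proof -
  have "a = l * of_int (round (a / l))" using assms(2) by (simp add: per1_def)
  then have "a / l = of_int (round (a / l))" using assms(1) by (simp add: field_simps)
  then show ?thesis by (metis Ints_of_int)
qed

lemma per1_sq_differentiable:
  assumes "l > 0" "a / l + 1/2 \<notin> \<int>"
  shows "(\<lambda>s. (per1 l (a + s))^2) differentiable (at 0)"
proof -
  have "((\<lambda>s. of_int \<lfloor>(a + s) / l + 1/2\<rfloor>) has_real_derivative 0) (at 0)"
    by (rule floor_has_real_derivative) (use assms in \<open>auto intro!: continuous_intros\<close>)
  then have "(\<lambda>s. of_int \<lfloor>(a + s) / l + 1/2\<rfloor> :: real) differentiable (at 0)"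
    using real_differentiable_def by blast
  then have "(\<lambda>s. (a + s - l * of_int \<lfloor>(a + s) / l + 1/2\<rfloor>)^2) differentiable (at 0)"
    by (intro derivative_intros)
  moreover have "(per1 l b)^2 = (b - l * of_int \<lfloor>b / l + 1/2\<rfloor>)^2" for b
    by (simp add: per1_def round_def)
  ultimately show ?thesis by simp
qed

definition per_vec :: "real^'n \<Rightarrow> real^'n \<Rightarrow> real^'n \<Rightarrow> real^'n" where
  "per_vec L y x = (\<chi> j. per1 (L$j) (y$j - x$j))"

lemma per_dist_eq_norm_per_vec: "per_dist L y x = norm (per_vec L y x)"
  by (simp add: per_dist_def norm_vec_def L2_set_def per_vec_def)

lemma per_dist_nonneg: "per_dist L y x \<ge> 0"
  by (simp add: per_dist_eq_norm_per_vec)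

lemma per_dist_lipschitz:
  assumes "\<forall>i. L$i > 0"
  shows "\<bar>per_dist L y x - per_dist L y' x'\<bar> \<le> (\<Sum>j\<in>UNIV. \<bar>(y$j - x$j) - (y'$j - x'$j)\<bar>)"
proof -
  have "\<bar>per_dist L y x - per_dist L y' x'\<bar> \<le> norm (per_vec L y x - per_vec L y' x')"
    unfolding per_dist_eq_norm_per_vec by (rule norm_triangle_ineq3)
  also have "\<dots> \<le> (\<Sum>j\<in>UNIV. \<bar>(per_vec L y x - per_vec L y' x')$j\<bar>)"
    by (rule norm_le_l1_cart)
  also have "\<dots> \<le> (\<Sum>j\<in>UNIV. \<bar>(y$j - x$j) - (y'$j - x'$j)\<bar>)"
    by (rule sum_mono) (simp add: per_vec_def per1_lipschitz assms)
  finally show ?thesis .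
qed

lemma per_dist_translate_axis:
  assumes "\<forall>i. L$i > 0"
  shows "\<bar>per_dist L (y + s *\<^sub>R axis i 1) x - per_dist L y x\<bar> \<le> \<bar>s\<bar>"
proof -
  have "\<bar>per_dist L (y + s *\<^sub>R axis i 1) x - per_dist L y x\<bar>
     \<le> (\<Sum>j\<in>UNIV. \<bar>((y + s *\<^sub>R axis i 1)$j - x$j) - (y$j - x$j)\<bar>)"
    by (rule per_dist_lipschitz[OF assms])
  also have "\<dots> = (\<Sum>j\<in>UNIV. if j = i then \<bar>s\<bar> else 0)"
    by (rule sum.cong) (auto simp: axis_def)
  finally show ?thesis by simp
qed

lemma continuous_on_per_dist:
  fixes L y :: "real^'n"
  assumes "\<forall>i. L$i > 0"
  shows "continuous_on UNIV (per_dist L y)"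
proof -
  have "\<bar>per_dist L y x - per_dist L y x'\<bar> \<le> of_nat CARD('n) * dist x x'" for x x' :: "real^'n"
  proof -
    have "\<bar>per_dist L y x - per_dist L y x'\<bar> \<le> (\<Sum>j\<in>UNIV. \<bar>(y$j - x$j) - (y$j - x'$j)\<bar>)"
      by (rule per_dist_lipschitz[OF assms])
    also have "\<dots> \<le> (\<Sum>j\<in>(UNIV::'n set). dist x x')"
      by (rule sum_mono)
        (use component_le_norm_cart[of "x - x'"] in \<open>simp add: dist_norm abs_minus_commute\<close>)
    finally show ?thesis by simp
  qed
  then have "lipschitz_on (of_nat CARD('n)) UNIV (per_dist L y)"
    by (intro lipschitz_onI) (auto simp: dist_real_def)
  then show ?thesis by (rule lipschitz_on_continuous_on)
qed

text \<open>Off the kink set, \<open>per1 (L$i) (x$i - y$i)\<close> is neither zero nor at a half period, so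
  \<open>per_dist L x y\<close> is positive and differentiable in the \<open>i\<close>-th coordinate of \<open>x\<close>.\<close>

definition kink_set :: "real^'n \<Rightarrow> real^'n \<Rightarrow> 'n \<Rightarrow> (real^'n) set" where
  "kink_set L x i = {y. 2 * (x$i - y$i) / L$i \<in> \<int>}"

lemma not_Ints_if_double_not_Ints:
  fixes u :: real
  assumes "2 * u \<notin> \<int>"
  shows "u \<notin> \<int>" "u + 1/2 \<notin> \<int>"
proof -
  show "u \<notin> \<int>"
    using assms Ints_mult[of 2 u] by auto
  have "2 * u = 2 * (u + 1/2) - 1" by simp
  then show "u + 1/2 \<notin> \<int>"
    using assms Ints_mult[of 2 "u + 1/2"] Ints_diff[of "2 * (u + 1/2)" 1] by auto
qed

lemma per_dist_pos_off_kink: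
  assumes "\<forall>j. L$j > 0" "y \<notin> kink_set L x i"
  shows "per_dist L x y > 0"
proof -
  have "(x$i - y$i) / L$i \<notin> \<int>"
    using assms(2) not_Ints_if_double_not_Ints(1)[of "(x$i - y$i) / L$i"]
    by (simp add: kink_set_def)
  then have "per1 (L$i) (x$i - y$i) \<noteq> 0"
    using per1_eq_0_imp_Ints assms(1) by blast
  moreover have "\<bar>per_vec L x y $ i\<bar> \<le> per_dist L x y"
    unfolding per_dist_eq_norm_per_vec by (rule component_le_norm_cart)
  ultimately show ?thesis by (simp add: per_vec_def per1_def)
qed

lemma per_dist_axis_differentiable:
  assumes box: "\<forall>j. L$j > 0" and y: "y \<notin> kink_set L x i"
  shows "(\<lambda>s. per_dist L (x + s *\<^sub>R axis i 1) y) differentiable (at 0)"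
proof -
  define S where "S s = (\<Sum>j\<in>UNIV. (per1 (L$j) ((x + s *\<^sub>R axis i 1)$j - y$j))^2)" for s
  have per_dist_S: "per_dist L (x + s *\<^sub>R axis i 1) y = sqrt (S s)" for s
    by (simp add: per_dist_def S_def)
  have half: "(x$i - y$i) / L$i + 1/2 \<notin> \<int>"
    using y not_Ints_if_double_not_Ints(2)[of "(x$i - y$i) / L$i"] by (simp add: kink_set_def)
  have "S differentiable (at 0)"
    unfolding S_def
  proof (intro differentiable_sum ballI)
    fix j
    show "(\<lambda>s. (per1 (L$j) ((x + s *\<^sub>R axis i 1)$j - y$j))^2) differentiable (at 0)"
    proof (cases "j = i")
      case True
      then show ?thesis
        using per1_sq_differentiable[OF _ half] box by (simp add: axis_def algebra_simps)
    qed (simp add: axis_def)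
  qed simp
  moreover have "sqrt differentiable (at (S 0))"
  proof -
    have "sqrt (S 0) > 0" using per_dist_pos_off_kink[OF box y] per_dist_S[of 0] by simp
    then show ?thesis
      using DERIV_real_sqrt real_differentiable_def real_sqrt_gt_0_iff by blast
  qed
  ultimately have "(\<lambda>s. sqrt (S s)) differentiable (at 0)"
    using differentiable_chain_at by (force simp: comp_def)
  then show ?thesis by (simp add: per_dist_S)
qed

lemma kink_set_null:
  fixes L x :: "real^'n"
  assumes "L$i > 0"
  shows "kink_set L x i \<in> null_sets lebesgue"
proof -
  have "2 * (x$i - y$i) / L$i = of_int m \<longleftrightarrow> y$i = x$i - of_int m * L$i / 2"
    for y :: "real^'n" and m
    using assms by (auto simp: field_simps)
  then have "kink_set L x i = (\<Union>m::int. {y. y$i = x$i - of_int m * L$i / 2})"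
    unfolding kink_set_def by (auto elim!: Ints_cases)
  also have "\<dots> \<in> null_sets lebesgue"
  proof (intro null_sets_UN)
    fix m :: int
    have "negligible {y::real^'n. y \<bullet> axis i 1 = x$i - of_int m * L$i / 2}"
      by (rule negligible_standard_hyperplane) simp
    then show "{y::real^'n. y$i = x$i - of_int m * L$i / 2} \<in> null_sets lebesgue"
      by (simp add: inner_axis negligible_iff_null_sets)
  qed
  finally show ?thesis .
qed

section \<open>Compactly supported kernels\<close>

lemma Ckc_has_derivative:
  assumes "Ckc p g" "1 \<le> p"
  obtains g' where "continuous_on {0..} g'"
    "\<And>r. 0 \<le> r \<Longrightarrow> (g has_real_derivative g' r) (at r within {0..})"
proof -
  obtain D :: "nat \<Rightarrow> real \<Rightarrow> real" where D0: "\<forall>r\<ge>0. D 0 r = g r"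
    and D: "\<forall>j<p. \<forall>r\<ge>0. (D j has_real_derivative D (Suc j) r) (at r within {0..})"
    and Dp: "continuous_on {0..} (D p)"
    using assms(1) unfolding Ckc_def by blast
  have "continuous_on {0..} (D 1)"
  proof (cases "p = 1")
    case False
    then have "(D 1 has_real_derivative D 2 r) (at r within {0..})" if "r \<ge> 0" for r
      using D assms(2) that by (auto simp: numeral_2_eq_2)
    then show ?thesis
      unfolding continuous_on_eq_continuous_within by (metis DERIV_continuous atLeast_iff)
  qed (use Dp in simp)
  moreover have "(g has_real_derivative D 1 r) (at r within {0..})" if "0 \<le> r" for r
  proof -
    have "(D 0 has_real_derivative D 1 r) (at r within {0..})" using D assms(2) that by auto
    then show ?thesis
      by (rule has_field_derivative_transform_within[where d=1]) (use D0 that in auto)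
  qed
  ultimately show ?thesis by (rule that)
qed

lemma Ckc_lipschitz:
  assumes "Ckc p g" "1 \<le> p"
  obtains M where "lipschitz_on M {0..} g"
proof -
  obtain R where R: "\<forall>r\<ge>R. g r = 0" using assms(1) unfolding Ckc_def by blast
  obtain g' where g': "continuous_on {0..} g'"
    "\<And>r. 0 \<le> r \<Longrightarrow> (g has_real_derivative g' r) (at r within {0..})"
    using Ckc_has_derivative[OF assms] by blast
  define R' where "R' = max R 0"
  have "continuous_on {0..R'} g'" by (rule continuous_on_subset[OF g'(1)]) auto
  then have "bounded (g' ` {0..R'})" by (intro compact_imp_bounded compact_continuous_image) auto
  then obtain B where B: "\<forall>r\<in>{0..R'}. norm (g' r) \<le> B"
    unfolding bounded_iff by auto
  have lip: "\<bar>g a - g b\<bar> \<le> B * \<bar>a - b\<bar>" if "a \<in> {0..R'}" "b \<in> {0..R'}" for a b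
    using field_differentiable_bound[of "{0..R'}" g g' B a b] B that
      DERIV_subset[OF g'(2), of _ "{0..R'}"] by auto
  have "\<bar>g' 0\<bar> \<le> B" using B R'_def by auto
  then have "B \<ge> 0" by linarith
  have "\<bar>g a - g b\<bar> \<le> B * \<bar>a - b\<bar>" if "a \<ge> 0" "b \<ge> 0" for a b
  proof -
    have "g c = g (min c R')" if "c \<ge> 0" for c
      using R R'_def that by (cases "c \<le> R'") auto
    then have "\<bar>g a - g b\<bar> = \<bar>g (min a R') - g (min b R')\<bar>" using that by simp
    also have "\<dots> \<le> B * \<bar>min a R' - min b R'\<bar>" by (rule lip) (use that R'_def in auto)
    also have "\<dots> \<le> B * \<bar>a - b\<bar>" using \<open>B \<ge> 0\<close> by (intro mult_left_mono) (auto simp: min_def)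
    finally show ?thesis .
  qed
  then have "lipschitz_on B {0..} g"
    using \<open>B \<ge> 0\<close> by (intro lipschitz_onI) (auto simp: dist_real_def)
  then show ?thesis by (rule that)
qed

lemma Ckc_continuous_on:
  assumes "Ckc p g" "1 \<le> p"
  shows "continuous_on {0..} g"
  using Ckc_lipschitz[OF assms] lipschitz_on_continuous_on by blast

lemma Ckc_bounded:
  assumes "Ckc p g" "1 \<le> p"
  obtains B where "\<And>r. 0 \<le> r \<Longrightarrow> \<bar>g r\<bar> \<le> B"
proof -
  obtain R where R: "\<forall>r\<ge>R. g r = 0" using assms(1) unfolding Ckc_def by blast
  define R' where "R' = max R 0"
  have "continuous_on {0..R'} g"
    by (rule continuous_on_subset[OF Ckc_continuous_on[OF assms]]) auto
  then have "bounded (g ` {0..R'})" by (intro compact_imp_bounded compact_continuous_image) auto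
  then obtain B where B: "\<forall>r\<in>{0..R'}. \<bar>g r\<bar> \<le> B"
    unfolding bounded_iff by auto
  have "\<bar>g r\<bar> \<le> B" if "0 \<le> r" for r
    using B[rule_format, of r] B[rule_format, of 0] R that R'_def
    by (cases "r \<le> R'") auto
  then show ?thesis by (rule that)
qed

lemma Ckc_differentiable_at:
  assumes "Ckc p g" "1 \<le> p" "r > 0"
  shows "g differentiable (at r)"
proof -
  obtain g' where "\<And>r. 0 \<le> r \<Longrightarrow> (g has_real_derivative g' r) (at r within {0..})"
    using Ckc_has_derivative[OF assms(1,2)] by blast
  then have "(g has_real_derivative g' r) (at r within {0..})" using assms(3) by simp
  moreover have "at r within {0..} = at r"
    by (rule at_within_interior) (use assms(3) in auto)
  ultimately have "(g has_real_derivative g' r) (at r)" by simp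
  then show ?thesis using real_differentiable_def by blast
qed

section \<open>The phase space measure\<close>

lemma torus_box_borel:
  fixes L :: "real^'n"
  shows "torus_box L \<in> sets borel"
  unfolding torus_box_def by measurable

lemma torus_box_lebesgue:
  fixes L :: "real^'n"
  shows "torus_box L \<in> sets lebesgue"
  using torus_box_borel by (metis sets_lborel sets_completionI_sets)

lemma finite_measure_torus_box:
  fixes L :: "real^'n"
  shows "finite_measure (lebesgue_on (torus_box L))"
proof -
  have "torus_box L \<subseteq> cbox 0 L"
    by (auto simp: torus_box_def mem_box_cart less_imp_le)
  then have "torus_box L \<in> lmeasurable"
    by (intro bounded_set_imp_lmeasurable torus_box_lebesgue bounded_subset[OF bounded_cbox])
  then show ?thesis
    by (intro finite_measureI)
      (simp add: emeasure_restrict_space torus_box_lebesgue fmeasurable_def)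
qed

lemma sets_sphere_measure [simp, measurable_cong]: "sets sphere_measure = sets borel"
  by (simp add: sphere_measure_def)

lemma space_sphere_measure [simp]: "space sphere_measure = UNIV"
  by (simp add: sphere_measure_def space_scale_measure)

lemma measurable_radial_projection:
  "(\<lambda>y::real^'n. y /\<^sub>R norm y) \<in> lebesgue_on (ball 0 1 - {0}) \<rightarrow>\<^sub>M borel"
  by (intro measurable_completion measurable_restrict_space1) measurable

lemma finite_measure_sphere_measure: "finite_measure (sphere_measure :: (real^'n) measure)"
proof -
  have "ball (0::real^'n) 1 - {0} \<in> lmeasurable"
    by (intro bounded_set_imp_lmeasurable) auto
  then have "emeasure (sphere_measure :: (real^'n) measure) UNIV < \<infinity>"
    unfolding sphere_measure_def
    by (simp add: emeasure_distr[OF measurable_radial_projection] emeasure_restrict_space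
        fmeasurable_def ennreal_mult_less_top ennreal_of_nat_eq_real_of_nat)
  then show ?thesis by (intro finite_measureI) simp
qed

lemma AE_sphere_measure_norm_le_1: "AE v in (sphere_measure :: (real^'n) measure). norm v \<le> 1"
proof (rule AE_I')
  let ?N = "{v::real^'n. 1 < norm v}"
  have N: "?N \<in> sets borel" by measurable
  have "norm (y /\<^sub>R norm y) \<le> 1" for y :: "real^'n"
    using norm_sgn[of y] by (simp add: sgn_div_norm split: if_splits)
  then have "(\<lambda>y::real^'n. y /\<^sub>R norm y) -` ?N \<inter> (ball 0 1 - {0}) = {}"
    by (auto simp del: norm_scaleR) (meson linorder_not_le)
  then have "emeasure (sphere_measure :: (real^'n) measure) ?N = 0"
    unfolding sphere_measure_def by (simp add: emeasure_distr[OF measurable_radial_projection N])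
  then show "?N \<in> null_sets sphere_measure" using N by (simp add: null_sets_def)
qed auto

lemma finite_measure_phase_measure: "finite_measure (phase_measure L)"
  unfolding phase_measure_def
  by (intro finite_measure_pair_measure finite_measure_torus_box finite_measure_sphere_measure)

lemma pair_sigma_finite_phase:
  "pair_sigma_finite (lebesgue_on (torus_box L)) (sphere_measure :: (real^'n) measure)"
proof -
  interpret A: finite_measure "lebesgue_on (torus_box L)" by (rule finite_measure_torus_box)
  interpret B: finite_measure "sphere_measure :: (real^'n) measure"
    by (rule finite_measure_sphere_measure)
  show ?thesis by unfold_locales
qed

lemma AE_phase_measure_norm_le_1: "AE z in phase_measure L. norm (snd z) \<le> 1"
  unfolding phase_measure_def
  by (rule pair_sigma_finite.AE_pair_snd[OF pair_sigma_finite_phase AE_sphere_measure_norm_le_1])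

lemma AE_phase_measure_fst:
  assumes "AE y in lebesgue_on (torus_box L). P y"
  shows "AE z in phase_measure L. P (fst z)"
  unfolding phase_measure_def by (rule pair_sigma_finite.AE_pair_fst[OF pair_sigma_finite_phase assms])

lemma AE_torus_box_not_kink:
  assumes "\<forall>j. L$j > 0"
  shows "AE y in lebesgue_on (torus_box L). y \<notin> kink_set L x i"
proof -
  have "AE y in lebesgue. y \<notin> kink_set L x i"
    using assms by (intro AE_not_in kink_set_null) auto
  then have "AE y in lebesgue. y \<in> torus_box L \<longrightarrow> y \<notin> kink_set L x i"
    by (auto elim: eventually_mono)
  moreover have "torus_box L \<inter> space lebesgue \<in> sets lebesgue"
    using torus_box_lebesgue by simp
  ultimately show ?thesis
    using AE_restrict_space_iff by blast
qed

lemma measurable_phase_fst: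
  fixes h :: "real^'n \<Rightarrow> real"
  assumes "h \<in> borel_measurable lebesgue"
  shows "(\<lambda>z. h (fst z)) \<in> borel_measurable (phase_measure L)"
  unfolding phase_measure_def
  by (rule measurable_compose[OF measurable_fst measurable_restrict_space1[OF assms]])

lemma L2_fun_phase_integrable:
  "L2_fun (phase_measure L) F \<Longrightarrow> integrable (phase_measure L) F"
  unfolding L2_fun_def
  by (elim conjE finite_measure.square_integrable_imp_integrable[OF finite_measure_phase_measure])

section \<open>Partial derivatives of the kernel\<close>

definition shifted_kernel ::
  "real^'n \<Rightarrow> (real \<Rightarrow> real) \<Rightarrow> real^'n \<Rightarrow> 'n \<Rightarrow> real \<Rightarrow> real^'n \<Rightarrow> real" where
  "shifted_kernel L phi x i s y = phi (per_dist L (x + s *\<^sub>R axis i 1) y)"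

definition kernel_partial :: "real^'n \<Rightarrow> (real \<Rightarrow> real) \<Rightarrow> real^'n \<Rightarrow> 'n \<Rightarrow> real^'n \<Rightarrow> real" where
  "kernel_partial L phi x i y = deriv (\<lambda>s. shifted_kernel L phi x i s y) 0"

lemma grad_kernel_nth: "grad (\<lambda>y. phi (per_dist L y x')) x $ i = kernel_partial L phi x i x'"
  by (simp add: grad_def kernel_partial_def shifted_kernel_def)

lemma shifted_kernel_lipschitz:
  assumes "\<forall>j. L$j > 0" "lipschitz_on M {0..} phi"
  shows "\<bar>shifted_kernel L phi x i s y - shifted_kernel L phi x i 0 y\<bar> \<le> M * \<bar>s\<bar>"
proof -
  have "\<bar>shifted_kernel L phi x i s y - shifted_kernel L phi x i 0 y\<bar>
      \<le> M * \<bar>per_dist L (x + s *\<^sub>R axis i 1) y - per_dist L x y\<bar>"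
    using lipschitz_onD[OF assms(2), of "per_dist L (x + s *\<^sub>R axis i 1) y" "per_dist L x y"]
    by (simp add: shifted_kernel_def dist_real_def per_dist_nonneg)
  also have "\<dots> \<le> M * \<bar>s\<bar>"
    using lipschitz_on_nonneg[OF assms(2)] per_dist_translate_axis[OF assms(1)]
    by (rule mult_left_mono[rotated])
  finally show ?thesis .
qed

lemma kernel_borel_measurable:
  assumes "\<forall>j. L$j > 0" "Ckc p phi" "1 \<le> p"
  shows "(\<lambda>y. phi (per_dist L x y)) \<in> borel_measurable borel"
proof -
  have "continuous_on UNIV (\<lambda>y. phi (per_dist L x y))"
    by (rule continuous_on_compose2[OF Ckc_continuous_on[OF assms(2,3)] continuous_on_per_dist[OF assms(1)]])
      (auto simp: per_dist_nonneg)
  then show ?thesis by (rule borel_measurable_continuous_onI)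
qed

lemma shifted_kernel_borel_measurable:
  assumes "\<forall>j. L$j > 0" "Ckc p phi" "1 \<le> p"
  shows "shifted_kernel L phi x i s \<in> borel_measurable borel"
  unfolding shifted_kernel_def by (rule kernel_borel_measurable[OF assms])

lemma kernel_partial_has_derivative:
  assumes "\<forall>j. L$j > 0" "Ckc p phi" "1 \<le> p" "y \<notin> kink_set L x i"
  shows "((\<lambda>s. shifted_kernel L phi x i s y) has_real_derivative kernel_partial L phi x i y) (at 0)"
proof -
  have "per_dist L (x + 0 *\<^sub>R axis i 1) y > 0" using per_dist_pos_off_kink[OF assms(1,4)] by simp
  then have "phi differentiable (at (per_dist L (x + 0 *\<^sub>R axis i 1) y))"
    by (rule Ckc_differentiable_at[OF assms(2,3)])
  with per_dist_axis_differentiable[OF assms(1,4)]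
  have "(\<lambda>s. shifted_kernel L phi x i s y) differentiable (at 0)"
    unfolding shifted_kernel_def using differentiable_chain_at by (force simp: comp_def)
  then show ?thesis
    unfolding kernel_partial_def by (simp add: DERIV_deriv_iff_real_differentiable)
qed

lemma abs_kernel_partial_le:
  assumes "\<forall>j. L$j > 0" "Ckc p phi" "1 \<le> p" "y \<notin> kink_set L x i" "lipschitz_on M {0..} phi"
  shows "\<bar>kernel_partial L phi x i y\<bar> \<le> M"
proof -
  let ?q = "\<lambda>h. (shifted_kernel L phi x i (0 + h) y - shifted_kernel L phi x i 0 y) / h"
  have "?q \<midarrow>0\<rightarrow> kernel_partial L phi x i y"
    using kernel_partial_has_derivative[OF assms(1-4)] by (simp add: DERIV_def)
  moreover have "\<forall>\<^sub>F h in at 0. \<bar>?q h\<bar> \<le> M"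
    using shifted_kernel_lipschitz[OF assms(1,5)]
    unfolding eventually_at by (intro exI[of _ 1]) (auto simp: abs_divide divide_le_eq)
  ultimately show ?thesis using tendsto_upperbound[OF tendsto_rabs] by fastforce
qed

lemma kernel_partial_measurable:
  assumes "\<forall>j. L$j > 0" "Ckc p phi" "1 \<le> p"
  shows "kernel_partial L phi x i \<in> borel_measurable lebesgue"
proof -
  define q where "q n y = (shifted_kernel L phi x i (inverse (Suc n)) y
      - shifted_kernel L phi x i 0 y) / inverse (Suc n)" for n y
  have "(\<lambda>y. lim (\<lambda>n. q n y)) \<in> borel_measurable borel"
    unfolding q_def using shifted_kernel_borel_measurable[OF assms] by measurable
  then have meas: "(\<lambda>y. lim (\<lambda>n. q n y)) \<in> borel_measurable lebesgue"
    by (rule borel_imp_lebesgue_measurable)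
  have "lim (\<lambda>n. q n y) = kernel_partial L phi x i y" if "y \<notin> kink_set L x i" for y
  proof (rule limI)
    have "(\<lambda>h. (shifted_kernel L phi x i (0 + h) y - shifted_kernel L phi x i 0 y) / h)
        \<midarrow>0\<rightarrow> kernel_partial L phi x i y"
      using kernel_partial_has_derivative[OF assms that] by (simp add: DERIV_def)
    then show "(\<lambda>n. q n y) \<longlonglongrightarrow> kernel_partial L phi x i y"
      using LIMSEQ_inverse_real_of_nat unfolding tendsto_at_iff_sequentially q_def
      by (force simp: comp_def)
  qed
  moreover have "AE y in lebesgue. y \<notin> kink_set L x i"
    using assms(1) by (intro AE_not_in kink_set_null) auto
  ultimately have "AE y in lebesgue. lim (\<lambda>n. q n y) = kernel_partial L phi x i y"
    by (auto elim: eventually_mono)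
  with meas show ?thesis by (rule borel_measurable_AE)
qed

section \<open>Stability of the alignment and repulsion fields\<close>

lemma alignment_kernel_measurable:
  fixes L x :: "real^'n"
  assumes "\<forall>j. L$j > 0" "Ckc p kk" "1 \<le> p"
  shows "(\<lambda>z. kk (per_dist L x (fst z)) *\<^sub>R snd z) \<in> borel_measurable (phase_measure L)"
proof (rule borel_measurable_scaleR)
  show "(\<lambda>z. kk (per_dist L x (fst z))) \<in> borel_measurable (phase_measure L)"
    by (intro measurable_phase_fst borel_imp_lebesgue_measurable kernel_borel_measurable[OF assms])
  show "snd \<in> borel_measurable (phase_measure L)"
    unfolding phase_measure_def by measurable
qed

lemma AE_alignment_kernel_bounded:
  assumes "\<And>r. 0 \<le> r \<Longrightarrow> \<bar>kk r\<bar> \<le> Kb"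
  shows "AE z in phase_measure L. norm (kk (per_dist L x (fst z)) *\<^sub>R snd z) \<le> Kb"
  using AE_phase_measure_norm_le_1
proof eventually_elim
  case (elim z)
  have "\<bar>kk (per_dist L x (fst z))\<bar> * norm (snd z) \<le> \<bar>kk (per_dist L x (fst z))\<bar>"
    using mult_left_mono[OF elim abs_ge_zero] by simp
  then show ?case using assms[OF per_dist_nonneg, of L x "fst z"] by simp
qed

lemma J_h_eq_J_f:
  fixes L x :: "real^'n" and fh :: "real^'n \<Rightarrow> real^'n \<Rightarrow> real"
  assumes box: "\<forall>j. L$j > 0" and kk: "Ckc p kk" "1 \<le> p"
    and Lh: "L2_fun (phase_measure L) (\<lambda>z. fh (fst z) (snd z))"
  shows "J_h L kk fh x = J_f L kk fh x"
proof -
  interpret P: pair_sigma_finite "lebesgue_on (torus_box L)" "sphere_measure :: (real^'n) measure"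
    by (rule pair_sigma_finite_phase)
  obtain Kb where Kb: "\<And>r. 0 \<le> r \<Longrightarrow> \<bar>kk r\<bar> \<le> Kb" using Ckc_bounded[OF kk] by blast
  have "integrable (phase_measure L) (\<lambda>z. fh (fst z) (snd z) *\<^sub>R (kk (per_dist L x (fst z)) *\<^sub>R snd z))"
    by (rule integrable_scaleR_AE_bounded[OF L2_fun_phase_integrable[OF Lh]
          alignment_kernel_measurable[OF box kk] AE_alignment_kernel_bounded[OF Kb]])
  from P.integral_fst'[OF this[unfolded phase_measure_def]] show ?thesis
    by (simp add: J_h_def J_f_def rhou_h_def phase_measure_def mult.commute flip: integral_scaleR_right)
qed

lemma norm_J_f_diff_le:
  fixes L x :: "real^'n" and f g :: "real^'n \<Rightarrow> real^'n \<Rightarrow> real"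
  assumes box: "\<forall>j. L$j > 0" and kk: "Ckc p kk" "1 \<le> p" and Kb: "\<And>r. 0 \<le> r \<Longrightarrow> \<bar>kk r\<bar> \<le> Kb"
    and Lf: "L2_fun (phase_measure L) (\<lambda>z. f (fst z) (snd z))"
    and Lg: "L2_fun (phase_measure L) (\<lambda>z. g (fst z) (snd z))"
  shows "norm (J_f L kk f x - J_f L kk g x)
    \<le> Kb * (\<integral>z. \<bar>f (fst z) (snd z) - g (fst z) (snd z)\<bar> \<partial>phase_measure L)"
proof -
  let ?W = "\<lambda>z. kk (per_dist L x (fst z)) *\<^sub>R snd z"
  note W = alignment_kernel_measurable[OF box kk, where x=x] AE_alignment_kernel_bounded[OF Kb, where L=L and x=x]
  note F_int = L2_fun_phase_integrable[OF Lf] and G_int = L2_fun_phase_integrable[OF Lg]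
  have "J_f L kk f x - J_f L kk g x
      = (\<integral>z. f (fst z) (snd z) *\<^sub>R ?W z \<partial>phase_measure L) - (\<integral>z. g (fst z) (snd z) *\<^sub>R ?W z \<partial>phase_measure L)"
    by (simp add: J_f_def mult.commute)
  also have "\<dots> = (\<integral>z. (f (fst z) (snd z) - g (fst z) (snd z)) *\<^sub>R ?W z \<partial>phase_measure L)"
    unfolding scaleR_diff_left
    by (rule Bochner_Integration.integral_diff[symmetric,
          OF integrable_scaleR_AE_bounded[OF F_int W] integrable_scaleR_AE_bounded[OF G_int W]])
  finally show ?thesis
    using norm_integral_scaleR_AE_bounded_le[OF Bochner_Integration.integrable_diff[OF F_int G_int] W]
    by simp
qed

lemma R_f_nth_eq:
  fixes L x :: "real^'n" and f :: "real^'n \<Rightarrow> real^'n \<Rightarrow> real"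
  assumes box: "\<forall>j. L$j > 0" and phi: "Ckc p phi" "1 \<le> p"
    and Lf: "L2_fun (phase_measure L) (\<lambda>z. f (fst z) (snd z))"
  shows "R_f L phi f x $ i
    = - (\<integral>z. f (fst z) (snd z) * kernel_partial L phi x i (fst z) \<partial>phase_measure L)"
proof -
  let ?P = "phase_measure L"
  let ?K = "shifted_kernel L phi x i"
  obtain M where M: "lipschitz_on M {0..} phi" using Ckc_lipschitz[OF phi] .
  obtain B where B: "\<And>r. 0 \<le> r \<Longrightarrow> \<bar>phi r\<bar> \<le> B" using Ckc_bounded[OF phi] by blast
  define F where "F = (\<lambda>z. f (fst z) (snd z))"
  have F_meas [measurable]: "F \<in> borel_measurable ?P" using Lf by (simp add: F_def L2_fun_def)
  have F_int: "integrable ?P F" using L2_fun_phase_integrable[OF Lf] by (simp add: F_def)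
  have K_meas [measurable]: "(\<lambda>z. ?K s (fst z)) \<in> borel_measurable ?P" for s
    by (intro measurable_phase_fst borel_imp_lebesgue_measurable shifted_kernel_borel_measurable[OF box phi])
  have g_meas [measurable]: "(\<lambda>z. kernel_partial L phi x i (fst z)) \<in> borel_measurable ?P"
    by (intro measurable_phase_fst kernel_partial_measurable[OF box phi])
  have "((\<lambda>s. \<integral>z. F z * ?K s (fst z) \<partial>?P) has_real_derivative
      (\<integral>z. F z * kernel_partial L phi x i (fst z) \<partial>?P)) (at 0)"
  proof (rule has_real_derivative_integral_dominated[where w="\<lambda>z. M * \<bar>F z\<bar>"])
    have "AE z in ?P. norm (?K 0 (fst z)) \<le> B"
      by (intro AE_I2) (simp add: shifted_kernel_def B per_dist_nonneg)
    then show "integrable ?P (\<lambda>z. F z * ?K 0 (fst z))"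
      using integrable_scaleR_AE_bounded[OF F_int K_meas] by simp
    show "\<bar>F z * ?K s (fst z) - F z * ?K 0 (fst z)\<bar> \<le> \<bar>s\<bar> * (M * \<bar>F z\<bar>)" for s z
    proof -
      have "\<bar>F z * ?K s (fst z) - F z * ?K 0 (fst z)\<bar> = \<bar>F z\<bar> * \<bar>?K s (fst z) - ?K 0 (fst z)\<bar>"
        by (simp add: abs_mult[symmetric] right_diff_distrib)
      also have "\<dots> \<le> \<bar>F z\<bar> * (M * \<bar>s\<bar>)"
        by (rule mult_left_mono[OF shifted_kernel_lipschitz[OF box M] abs_ge_zero])
      finally show ?thesis by (simp only: mult_ac)
    qed
    show "AE z in ?P. ((\<lambda>s. F z * ?K s (fst z)) has_real_derivative
        F z * kernel_partial L phi x i (fst z)) (at 0)"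
      using AE_phase_measure_fst[OF AE_torus_box_not_kink[OF box]]
      by eventually_elim (intro DERIV_cmult kernel_partial_has_derivative[OF box phi])
  qed (use F_int in auto)
  then show ?thesis
    by (simp add: DERIV_imp_deriv R_f_def grad_def shifted_kernel_def F_def mult.commute)
qed

lemma R_h_nth_eq:
  fixes L x :: "real^'n" and fh :: "real^'n \<Rightarrow> real^'n \<Rightarrow> real"
  assumes box: "\<forall>j. L$j > 0" and phi: "Ckc p phi" "1 \<le> p"
    and Lh: "L2_fun (phase_measure L) (\<lambda>z. fh (fst z) (snd z))"
  shows "R_h L phi fh x $ i
    = - (\<integral>z. fh (fst z) (snd z) * kernel_partial L phi x i (fst z) \<partial>phase_measure L)"
proof -
  let ?B = "lebesgue_on (torus_box L)"
  interpret P: pair_sigma_finite ?B "sphere_measure :: (real^'n) measure"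
    by (rule pair_sigma_finite_phase)
  obtain M where M: "lipschitz_on M {0..} phi" using Ckc_lipschitz[OF phi] .
  note H_int = L2_fun_phase_integrable[OF Lh]
  have rho_int: "integrable ?B (rho_h fh)"
    using P.integrable_fst'[OF H_int[unfolded phase_measure_def]] by (simp add: rho_h_def[abs_def])
  have g_meas: "kernel_partial L phi x j \<in> borel_measurable ?B" for j
    by (intro measurable_restrict_space1 kernel_partial_measurable[OF box phi])
  have g_bound: "AE y in ?B. norm (kernel_partial L phi x j y) \<le> M" for j
    using AE_torus_box_not_kink[OF box, of x j]
    by eventually_elim (simp add: abs_kernel_partial_le[OF box phi _ M])
  have "integrable ?B (\<lambda>x'. rho_h fh x' *\<^sub>R grad (\<lambda>y. phi (per_dist L y x')) x)"
    unfolding integrable_iff_component[OF torus_box_lebesgue]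
    using integrable_scaleR_AE_bounded[OF rho_int g_meas g_bound] by (simp add: grad_kernel_nth)
  from integral_bounded_linear[OF bounded_linear_vec_nth this, of i]
  have "R_h L phi fh x $ i = - (\<integral>x'. rho_h fh x' * kernel_partial L phi x i x' \<partial>?B)"
    by (simp add: R_h_def grad_kernel_nth)
  also have "\<dots> = - (\<integral>z. fh (fst z) (snd z) * kernel_partial L phi x i (fst z) \<partial>phase_measure L)"
  proof -
    have "integrable (phase_measure L) (\<lambda>z. fh (fst z) (snd z) * kernel_partial L phi x i (fst z))"
      using integrable_scaleR_AE_bounded[OF H_int
          measurable_phase_fst[OF kernel_partial_measurable[OF box phi]] AE_phase_measure_fst[OF g_bound]]
      by simp
    from P.integral_fst'[OF this[unfolded phase_measure_def]] show ?thesis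
      by (simp add: phase_measure_def rho_h_def integral_mult_left_zero)
  qed
  finally show ?thesis .
qed

lemma R_h_eq_R_f:
  fixes L x :: "real^'n" and fh :: "real^'n \<Rightarrow> real^'n \<Rightarrow> real"
  assumes "\<forall>j. L$j > 0" "Ckc p phi" "1 \<le> p"
    and "L2_fun (phase_measure L) (\<lambda>z. fh (fst z) (snd z))"
  shows "R_h L phi fh x = R_f L phi fh x"
  by (simp add: vec_eq_iff R_f_nth_eq[OF assms] R_h_nth_eq[OF assms])

lemma norm_R_f_diff_le:
  fixes L x :: "real^'n" and f g :: "real^'n \<Rightarrow> real^'n \<Rightarrow> real"
  assumes box: "\<forall>j. L$j > 0" and phi: "Ckc p phi" "1 \<le> p" and M: "lipschitz_on M {0..} phi"
    and Lf: "L2_fun (phase_measure L) (\<lambda>z. f (fst z) (snd z))"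
    and Lg: "L2_fun (phase_measure L) (\<lambda>z. g (fst z) (snd z))"
  shows "norm (R_f L phi f x - R_f L phi g x)
    \<le> of_nat CARD('n) * M * (\<integral>z. \<bar>f (fst z) (snd z) - g (fst z) (snd z)\<bar> \<partial>phase_measure L)"
proof -
  let ?P = "phase_measure L"
  define D where "D = (\<lambda>z. f (fst z) (snd z) - g (fst z) (snd z))"
  note F_int = L2_fun_phase_integrable[OF Lf] and G_int = L2_fun_phase_integrable[OF Lg]
  have "\<bar>(R_f L phi f x - R_f L phi g x) $ i\<bar> \<le> M * (\<integral>z. \<bar>D z\<bar> \<partial>?P)" for i
  proof -
    let ?d = "\<lambda>z. kernel_partial L phi x i (fst z)"
    have d_meas: "?d \<in> borel_measurable ?P"
      by (intro measurable_phase_fst kernel_partial_measurable[OF box phi])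
    have d_bound: "AE z in ?P. norm (?d z) \<le> M"
      using AE_phase_measure_fst[OF AE_torus_box_not_kink[OF box, of x i]]
      by eventually_elim (simp add: abs_kernel_partial_le[OF box phi _ M])
    have "(R_f L phi f x - R_f L phi g x) $ i = - (\<integral>z. D z * ?d z \<partial>?P)"
      using integrable_scaleR_AE_bounded[OF F_int d_meas d_bound]
        integrable_scaleR_AE_bounded[OF G_int d_meas d_bound]
      by (simp add: R_f_nth_eq[OF box phi Lf] R_f_nth_eq[OF box phi Lg] D_def left_diff_distrib)
    then show ?thesis
      using norm_integral_scaleR_AE_bounded_le[OF _ d_meas d_bound, of D]
        Bochner_Integration.integrable_diff[OF F_int G_int]
      by (simp add: D_def)
  qed
  then have "norm (R_f L phi f x - R_f L phi g x) \<le> (\<Sum>i\<in>(UNIV::'n set). M * (\<integral>z. \<bar>D z\<bar> \<partial>?P))"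
    by (intro order_trans[OF norm_le_l1_cart] sum_mono)
  then show ?thesis by (simp add: D_def)
qed

lemma norm_normalize_diff_le:
  fixes a b :: "'a::real_normed_vector"
  assumes "0 < \<xi>" "\<xi> \<le> norm a"
  shows "norm (a /\<^sub>R norm a - b /\<^sub>R norm b) \<le> 2 / \<xi> * norm (a - b)"
proof -
  have a: "norm a > 0" using assms by linarith
  have "norm (b /\<^sub>R norm a - b /\<^sub>R norm b) \<le> norm (a - b) / norm a"
  proof (cases "b = 0")
    case False
    have "norm (b /\<^sub>R norm a - b /\<^sub>R norm b) = \<bar>inverse (norm a) - inverse (norm b)\<bar> * norm b"
      by (simp add: scaleR_diff_left[symmetric])
    also have "\<dots> = \<bar>norm b - norm a\<bar> / norm a"
      using a False by (simp add: field_simps abs_divide)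
    also have "\<dots> \<le> norm (a - b) / norm a"
      using a norm_triangle_ineq3[of b a] by (simp add: divide_right_mono norm_minus_commute)
    finally show ?thesis .
  qed (use a in simp)
  moreover have "norm (a /\<^sub>R norm a - b /\<^sub>R norm a) = norm (a - b) / norm a"
    by (simp add: scaleR_diff_right[symmetric] divide_inverse mult.commute)
  ultimately have "norm (a /\<^sub>R norm a - b /\<^sub>R norm b) \<le> 2 * norm (a - b) / norm a"
    using norm_triangle_ineq[of "a /\<^sub>R norm a - b /\<^sub>R norm a" "b /\<^sub>R norm a - b /\<^sub>R norm b"]
    by simp
  also have "\<dots> \<le> 2 * norm (a - b) / \<xi>"
    using assms a by (intro divide_left_mono) auto
  finally show ?thesis by simp
qed

lemma v_h_eq_v_f:
  fixes L x :: "real^'n" and fh :: "real^'n \<Rightarrow> real^'n \<Rightarrow> real"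
  assumes "\<forall>j. L$j > 0" "Ckc p kk" "Ckc p phi" "1 \<le> p"
    and "L2_fun (phase_measure L) (\<lambda>z. fh (fst z) (snd z))"
  shows "v_h L kk phi fh x = v_f L kk phi fh x"
  using assms by (simp add: v_h_def v_f_def J_h_eq_J_f R_h_eq_R_f)

lemma norm_v_f_diff_le:
  fixes L x :: "real^'n" and f g :: "real^'n \<Rightarrow> real^'n \<Rightarrow> real"
  assumes box: "\<forall>j. L$j > 0" and kk: "Ckc p kk" and phi: "Ckc p phi" and p: "1 \<le> p"
    and Kb: "\<And>r. 0 \<le> r \<Longrightarrow> \<bar>kk r\<bar> \<le> Kb" and M: "lipschitz_on M {0..} phi"
    and Lf: "L2_fun (phase_measure L) (\<lambda>z. f (fst z) (snd z))"
    and Lg: "L2_fun (phase_measure L) (\<lambda>z. g (fst z) (snd z))"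
    and \<xi>: "0 < \<xi>" "\<xi> \<le> norm (J_f L kk f x + R_f L phi f x)"
  shows "norm (v_f L kk phi f x - v_f L kk phi g x)
    \<le> 2 / \<xi> * (Kb + of_nat CARD('n) * M) * sqrt (measure (phase_measure L) (space (phase_measure L)))
      * L2_dist L f g"
proof -
  let ?P = "phase_measure L"
  let ?I = "\<integral>z. \<bar>f (fst z) (snd z) - g (fst z) (snd z)\<bar> \<partial>?P"
  have "Kb \<ge> 0" using Kb[of 0] by linarith
  have "M \<ge> 0" using M by (rule lipschitz_on_nonneg)
  have L2: "?I \<le> sqrt (measure ?P (space ?P)) * L2_dist L f g"
    using L2_fun_diff[OF Lf Lg]
    unfolding L2_dist_def L2_fun_def
    by (intro finite_measure.integral_abs_le_sqrt_integral_square[OF finite_measure_phase_measure]) auto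
  have "norm (v_f L kk phi f x - v_f L kk phi g x)
      \<le> 2 / \<xi> * norm ((J_f L kk f x - J_f L kk g x) + (R_f L phi f x - R_f L phi g x))"
    using norm_normalize_diff_le[OF \<xi>, of "J_f L kk g x + R_f L phi g x"]
    by (simp add: v_f_def unitv_def algebra_simps)
  also have "\<dots> \<le> 2 / \<xi> * (Kb * ?I + of_nat CARD('n) * M * ?I)"
    using norm_J_f_diff_le[OF box kk p Kb Lf Lg, of x] norm_R_f_diff_le[OF box phi p M Lf Lg, of x]
      norm_triangle_ineq[of "J_f L kk f x - J_f L kk g x" "R_f L phi f x - R_f L phi g x"] \<xi>(1)
    by (intro mult_left_mono) auto
  also have "\<dots> = 2 / \<xi> * (Kb + of_nat CARD('n) * M) * ?I"
    by (simp add: algebra_simps)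
  also have "\<dots> \<le> 2 / \<xi> * (Kb + of_nat CARD('n) * M) * (sqrt (measure ?P (space ?P)) * L2_dist L f g)"
    using L2 \<xi>(1) \<open>Kb \<ge> 0\<close> \<open>M \<ge> 0\<close> by (intro mult_left_mono) auto
  finally show ?thesis by (simp add: mult.assoc)
qed

text \<open>The bound holds at every point of \<open>\<Omega>\<close>, not only almost everywhere.\<close>
theorem mainTheorem6:
  fixes L :: "real^'n" and kk phi :: "real \<Rightarrow> real" and p :: nat and \<xi> :: real
  assumes dim: "CARD('n) \<ge> 2"
    and box: "\<forall>i. L$i > 0"
    and H0: "p \<ge> 2" "Ckc p kk" "Ckc p phi" "\<forall>r\<ge>0. kk r \<ge> 0" "\<forall>r\<ge>0. phi r \<ge> 0"
    and xi: "\<xi> > 0"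
  shows "\<exists>C>0. \<forall>T>0. \<forall>(f :: real \<Rightarrow> real^'n \<Rightarrow> real^'n \<Rightarrow> real) fh.
     ((\<forall>t\<in>{0..T}. L2_fun (phase_measure L) (\<lambda>z. f t (fst z) (snd z))) \<and>
      (\<forall>t\<in>{0..T}. \<forall>x\<in>torus_box L. norm (J_f L kk (f t) x + R_f L phi (f t) x) \<ge> \<xi>) \<and>
      (\<forall>t\<in>{0..T}. L2_fun (phase_measure L) (\<lambda>z. fh t (fst z) (snd z))) \<and>
      (\<forall>t\<in>{0..T}. \<forall>x\<in>torus_box L. J_h L kk (fh t) x + R_h L phi (fh t) x \<noteq> 0))
     \<longrightarrow> (\<forall>t\<in>{0..T}. AE x in lebesgue_on (torus_box L).
            norm (v_f L kk phi (f t) x - v_h L kk phi (fh t) x) \<le> C * L2_dist L (f t) (fh t))"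
proof -
  have p: "1 \<le> p" using H0(1) by simp
  obtain Kb where Kb: "\<And>r. 0 \<le> r \<Longrightarrow> \<bar>kk r\<bar> \<le> Kb" using Ckc_bounded[OF H0(2) p] by blast
  obtain M where M: "lipschitz_on M {0..} phi" using Ckc_lipschitz[OF H0(3) p] .
  define C0 where "C0 = 2 / \<xi> * (Kb + of_nat CARD('n) * M)
    * sqrt (measure (phase_measure L) (space (phase_measure L)))"
  have "C0 \<ge> 0"
    using Kb[of 0] lipschitz_on_nonneg[OF M] xi by (simp add: C0_def)
  have bound: "norm (v_f L kk phi F x - v_h L kk phi G x) \<le> (C0 + 1) * L2_dist L F G"
    if "L2_fun (phase_measure L) (\<lambda>z. F (fst z) (snd z))"
      "L2_fun (phase_measure L) (\<lambda>z. G (fst z) (snd z))"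
      "\<xi> \<le> norm (J_f L kk F x + R_f L phi F x)" for F G x
    using norm_v_f_diff_le[OF box H0(2,3) p Kb M that(1,2) xi that(3)]
      v_h_eq_v_f[OF box H0(2,3) p that(2)] mult_right_mono[of C0 "C0 + 1" "L2_dist L F G"]
    by (simp add: C0_def L2_dist_def)
  then show ?thesis
    using \<open>C0 \<ge> 0\<close> by (intro exI[of _ "C0 + 1"]) (auto intro!: AE_I2 bound)
qed

end
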